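(* Let $\mathbf{f}=\{f_1,\dots,f_m\}$ be a simple problem and $\mathbf{g}\subseteq\mathbf{f}$ a subproblem. Then for each $i\in\{1,\dots,m\}$, the restriction of the projection $\pi_{-i}:\mathbb{R}^m\to\mathbb{R}^m$, $(y_1,\dots,y_m)\mapsto(y_1,\dots,y_{i-1},0,y_{i+1},\dots,y_m)$, to $\operatorname{Int}\mathbf{f}X^*(\mathbf{g})$ is a topological embedding.
   Context: A problem is a finite set $\mathbf{f}=\{f_1,\dots,f_m\}$ of functions $f_i:\mathbb{R}^n\to\mathbb{R}$ together with a feasible region $X\subseteq\mathbb{R}^n$, to be minimized simultaneously; its evaluation map is $x\mapsto(f_1(x),\dots,f_m(x))$. A subproblem $\mathbf{g}\subseteq\mathbf{f}$ is a subset of these functions (including $\emptyset$ and $\mathbf{f}$), with the same $X$; its evaluation map is $x\mapsto(f_i(x))_{f_i\in\mathbf{g}}\in\mathbb{R}^{|\mathbf{g}|}$. The Pareto set $X^*(\mathbf{g})$ is the set of $x^*\in X$ for which there is no $x\in X$ with $f_i(x)\le f_i(x^* )$ for all $f_i\in\mathbf{g}$ and $f_j(x)<f_j(x^* )$ for some $f_j\in\mathbf{g}$; by convention $X^*(\emptyset)=\emptyset$. $\mathbf{f}X^*(\mathbf{g})$ denotes the image of $X^*(\mathbf{g})$ under the evaluation map of $\mathbf{f}$. A problem $\mathbf{f}$ is simple if every subproblem $\mathbf{g}\subseteq\mathbf{f}$ with $k=|\mathbf{g}|$ objectives satisfies: (S1) $X^*(\mathbf{g})$ is homeomorphic to $\Delta^{k-1}=\{t\in[0,1]^k:\sum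 t_i=1\}$ (with $\Delta^{-1}=\emptyset$); (S2) the evaluation map of $\mathbf{g}$ restricted to $X^*(\mathbf{g})$ is a topological embedding into $\mathbb{R}^k$. For a simple problem, each $\mathbf{f}X^*(\mathbf{g})$ is homeomorphic to $\Delta^{|\mathbf{g}|-1}$, hence a topological manifold with boundary; $\operatorname{Int}$ and $\partial$ denote its manifold interior and manifold boundary (for a single point, the interior is the point and the boundary is empty). All sets carry the subspace topology from Euclidean space. *)

theory Defs
  imports "HOL-Analysis.Analysis"
begin

text \<open>A problem: objectives indexed by a finite type 'm (so m = CARD('m)),
  each f i : R^n -> R, with feasible region X.  A subproblem is a set g of indices.\<close>

definition pareto_set ::
  "(real^'n) set \<Rightarrow> ('m::finite \<Rightarrow> real^'n \<Rightarrow> real) \<Rightarrow> 'm set \<Rightarrow> (real^'n) set" where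
  "pareto_set X f g =
     (if g = {} then {} else
      {xs \<in> X. \<not> (\<exists>x\<in>X. (\<forall>i\<in>g. f i x \<le> f i xs) \<and> (\<exists>j\<in>g. f j x < f j xs))})"

definition eval_map :: "('m::finite \<Rightarrow> real^'n \<Rightarrow> real) \<Rightarrow> real^'n \<Rightarrow> real^'m" where
  "eval_map f x = (\<chi> i. f i x)"

text \<open>Evaluation map of the subproblem g, into the coordinate copy of R^|g| inside R^m
  (coordinates outside g are set to 0).\<close>
definition sub_eval_map :: "('m::finite \<Rightarrow> real^'n \<Rightarrow> real) \<Rightarrow> 'm set \<Rightarrow> real^'n \<Rightarrow> real^'m" where
  "sub_eval_map f g x = (\<chi> i. if i \<in> g then f i x else 0)"

text \<open>The standard simplex Delta^{|g|-1}, realised on the coordinates g (empty if g is empty).\<close>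
definition std_simplex :: "'m::finite set \<Rightarrow> (real^'m) set" where
  "std_simplex g = {t. (\<forall>j. j \<notin> g \<longrightarrow> t $ j = 0) \<and> (\<forall>j\<in>g. 0 \<le> t $ j) \<and> (\<Sum>j\<in>g. t $ j) = 1}"

definition topological_embedding :: "'a::topological_space set \<Rightarrow> ('a \<Rightarrow> 'b::topological_space) \<Rightarrow> bool" where
  "topological_embedding A h \<longleftrightarrow> (\<exists>k. homeomorphism A (h ` A) h k)"

definition simple_problem :: "(real^'n) set \<Rightarrow> ('m::finite \<Rightarrow> real^'n \<Rightarrow> real) \<Rightarrow> bool" where
  "simple_problem X f \<longleftrightarrow>
     (\<forall>g. pareto_set X f g homeomorphic std_simplex g \<and>
          topological_embedding (pareto_set X f g) (sub_eval_map f g))"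

text \<open>Manifold interior of a d-dimensional topological manifold with boundary S:
  points having a neighbourhood (open in S) homeomorphic to an open subset of R^d,
  where R^d is realised as a d-dimensional linear subspace of R^m.\<close>
definition manifold_interior :: "nat \<Rightarrow> (real^'m::finite) set \<Rightarrow> (real^'m) set" where
  "manifold_interior d S = {x \<in> S. \<exists>U (T::(real^'m) set) V. openin (top_of_set S) U \<and> x \<in> U \<and>
       subspace T \<and> dim T = d \<and> openin (top_of_set T) V \<and> U homeomorphic V}"

definition proj_minus :: "'m::finite \<Rightarrow> real^'m \<Rightarrow> real^'m" where
  "proj_minus i y = (\<chi> j. if j = i then 0 else y $ j)"

end

theory Submission
  imports Defs
begin

text \<open>Pick an objective \<open>j\<^sub>0 \<in> g\<close>, taking \<open>j\<^sub>0 = i\<close> when \<open>i \<in> g\<close>. On the Pareto set of \<open>g\<close> the value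
  of \<open>f j\<^sub>0\<close> is determined by the other objectives of \<open>g\<close> (otherwise one point would dominate
  the other), and by simplicity the evaluation map of \<open>g\<close> is injective there. Hence the
  coordinate projection onto \<open>g - {j\<^sub>0}\<close> is injective on the Pareto front. It maps the
  \<open>(|g| - 1)\<close>-dimensional manifold interior into a space of dimension \<open>|g| - 1\<close>, so by
  invariance of domain it is an embedding; since it factors through \<open>\<pi>\<^sub>-\<^sub>i\<close>, so is \<open>\<pi>\<^sub>-\<^sub>i\<close>.\<close>

definition coord_proj :: "'m::finite set \<Rightarrow> real^'m \<Rightarrow> real^'m" where
  "coord_proj G y = (\<chi> j. if j \<in> G then y $ j else 0)"

lemma linear_coord_proj: "linear (coord_proj G)"
  unfolding coord_proj_def by (rule linearI) (auto simp: vec_eq_iff)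

lemma continuous_on_coord_proj: "continuous_on A (coord_proj G)"
  by (rule linear_continuous_on[OF linear_conv_bounded_linear[THEN iffD1, OF linear_coord_proj]])

lemma coord_proj_coord_proj: "coord_proj G (coord_proj H y) = coord_proj (G \<inter> H) y"
  unfolding coord_proj_def by (simp add: vec_eq_iff)

lemma proj_minus_eq_coord_proj: "proj_minus i = coord_proj (- {i})"
  unfolding proj_minus_def coord_proj_def by (auto simp: fun_eq_iff vec_eq_iff)

lemma coord_proj_eq_sum_axis: "coord_proj G y = (\<Sum>j\<in>G. (y $ j) *\<^sub>R axis j 1)"
proof -
  have "(\<Sum>j\<in>G. (y $ j) *\<^sub>R axis j (1::real)) $ k = (\<Sum>j\<in>G. if j = k then y $ k else 0)" for k
    unfolding sum_component by (rule sum.cong) (auto simp: axis_def)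
  then show ?thesis
    unfolding coord_proj_def by (simp add: vec_eq_iff)
qed

lemma coord_proj_in_span_axis: "coord_proj G y \<in> span ((\<lambda>j. axis j 1) ` G)"
  unfolding coord_proj_eq_sum_axis by (intro span_sum span_scale span_base imageI)

lemma dim_span_axis_le_card: "dim (span ((\<lambda>j. axis j (1::real)) ` G :: (real^'m::finite) set)) \<le> card G"
proof -
  have "dim (span ((\<lambda>j. axis j (1::real)) ` G :: (real^'m) set)) \<le> card ((\<lambda>j. axis j (1::real)) ` G)"
    by (rule dim_le_card) auto
  also have "\<dots> \<le> card G"
    by (rule card_image_le) simp
  finally show ?thesis .
qed

lemma pareto_set_subset: "pareto_set X f g \<subseteq> X"
  unfolding pareto_set_def by auto

lemma pareto_set_not_dominated:
  assumes "xs \<in> pareto_set X f g" "x \<in> X" "\<forall>i\<in>g. f i x \<le> f i xs" "j \<in> g" "f j x < f j xs"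
  shows False
  using assms unfolding pareto_set_def by (auto split: if_splits)

lemma pareto_set_eq_but_one_imp_eq:
  assumes x: "x \<in> pareto_set X f g" and x': "x' \<in> pareto_set X f g"
    and eq: "\<forall>j\<in>g - {j\<^sub>0}. f j x = f j x'"
  shows "\<forall>j\<in>g. f j x = f j x'"
proof -
  have not_less: "\<not> f j\<^sub>0 a < f j\<^sub>0 b"
    if "a \<in> pareto_set X f g" "b \<in> pareto_set X f g" "j\<^sub>0 \<in> g"
      and "\<forall>j\<in>g - {j\<^sub>0}. f j a = f j b" for a b
  proof
    assume less: "f j\<^sub>0 a < f j\<^sub>0 b"
    with that(4) have "\<forall>j\<in>g. f j a \<le> f j b"
      by (metis DiffI less_eq_real_def singletonD)
    with that less pareto_set_subset show False
      by (blast intro: pareto_set_not_dominated)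
  qed
  show ?thesis
  proof (cases "j\<^sub>0 \<in> g")
    case True
    with not_less[OF x x'] not_less[OF x' x] eq have "f j\<^sub>0 x = f j\<^sub>0 x'"
      by force
    with eq show ?thesis by blast
  qed (use eq in blast)
qed

lemma inj_on_coord_proj_pareto_front:
  assumes "inj_on (sub_eval_map f g) (pareto_set X f g)"
  shows "inj_on (coord_proj (g - {j\<^sub>0})) (eval_map f ` pareto_set X f g)"
proof (rule inj_on_imageI, rule inj_onI)
  fix x x' assume x: "x \<in> pareto_set X f g" and x': "x' \<in> pareto_set X f g"
    and eq: "(coord_proj (g - {j\<^sub>0}) \<circ> eval_map f) x = (coord_proj (g - {j\<^sub>0}) \<circ> eval_map f) x'"
  have "f j x = f j x'" if "j \<in> g - {j\<^sub>0}" for j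
    using arg_cong[OF eq, of "\<lambda>v. v $ j"] that by (simp add: coord_proj_def eval_map_def)
  then have "\<forall>j\<in>g. f j x = f j x'"
    using pareto_set_eq_but_one_imp_eq[OF x x'] by blast
  then have "sub_eval_map f g x = sub_eval_map f g x'"
    by (simp add: sub_eval_map_def vec_eq_iff)
  then show "x = x'"
    by (rule inj_onD[OF assms _ x x'])
qed

lemma manifold_interior_subset: "manifold_interior d S \<subseteq> S"
  unfolding manifold_interior_def by blast

text \<open>A chart of \<open>S\<close> around a point of the interior consists of interior points only, so the
  interior is itself covered by charts.\<close>
lemma manifold_interior_subset_manifold_interior:
  "manifold_interior d S \<subseteq> manifold_interior d (manifold_interior d S)"
proof
  fix y assume "y \<in> manifold_interior d S"
  then obtain U and T :: "(real^'a) set" and V where chart: "openin (top_of_set S) U" "y \<in> U"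
      "subspace T" "dim T = d" "openin (top_of_set T) V" "U homeomorphic V"
    unfolding manifold_interior_def by blast
  then have "U \<subseteq> manifold_interior d S"
    using openin_imp_subset unfolding manifold_interior_def by blast
  then have "openin (top_of_set (manifold_interior d S)) U"
    by (rule openin_subset_trans[OF chart(1) _ manifold_interior_subset])
  with chart \<open>y \<in> manifold_interior d S\<close> show "y \<in> manifold_interior d (manifold_interior d S)"
    unfolding manifold_interior_def by blast
qed

lemma invariance_of_domain_homeomorphic:
  fixes \<psi> :: "'a::euclidean_space \<Rightarrow> 'b::euclidean_space" and T :: "'c::euclidean_space set"
  assumes "U homeomorphic V\<^sub>0" "openin (top_of_set T) V\<^sub>0" "subspace T" "subspace V" "dim V \<le> dim T"
    and "continuous_on U \<psi>" "inj_on \<psi> U" "\<psi> ` U \<subseteq> V"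
  shows "openin (top_of_set V) (\<psi> ` U)"
proof -
  obtain h h' where hom: "homeomorphism U V\<^sub>0 h h'"
    using assms(1) homeomorphic_def by blast
  then have h': "h' ` V\<^sub>0 = U" "continuous_on V\<^sub>0 h'" "inj_on h' V\<^sub>0"
    by (auto simp: homeomorphism_def intro: inj_on_inverseI)
  have "openin (top_of_set V) ((\<psi> \<circ> h') ` V\<^sub>0)"
  proof (rule invariance_of_domain_subspaces[OF assms(2-5)])
    show "continuous_on V\<^sub>0 (\<psi> \<circ> h')"
      using continuous_on_compose[OF h'(2)] assms(6) h'(1) by simp
    show "inj_on (\<psi> \<circ> h') V\<^sub>0"
      using comp_inj_on[OF h'(3)] assms(7) h'(1) by simp
    show "\<psi> \<circ> h' \<in> V\<^sub>0 \<rightarrow> V"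
      using assms(8) h'(1) by auto
  qed
  then show ?thesis
    by (simp only: image_comp[symmetric] h'(1))
qed

lemma injective_into_subspace_imp_open_map:
  fixes \<psi> :: "real^'m::finite \<Rightarrow> 'b::euclidean_space"
  assumes charts: "M \<subseteq> manifold_interior d M"
    and cont: "continuous_on M \<psi>" and inj: "inj_on \<psi> M"
    and "subspace V" and "dim V \<le> d" and into: "\<psi> ` M \<subseteq> V"
    and W: "openin (top_of_set M) W"
  shows "openin (top_of_set (\<psi> ` M)) (\<psi> ` W)"
proof -
  have "\<exists>Z. openin (top_of_set (\<psi> ` M)) Z \<and> \<psi> y \<in> Z \<and> Z \<subseteq> \<psi> ` W" if "y \<in> W" for y
  proof -
    have "y \<in> manifold_interior d M"
      using charts W \<open>y \<in> W\<close> openin_imp_subset by blast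
    then obtain U and T :: "(real^'m) set" and V\<^sub>0 where chart: "openin (top_of_set M) U" "y \<in> U"
        "subspace T" "dim T = d" "openin (top_of_set T) V\<^sub>0" "U homeomorphic V\<^sub>0"
      unfolding manifold_interior_def by blast
    obtain h h' where hom: "homeomorphism U V\<^sub>0 h h'"
      using chart(6) homeomorphic_def by blast
    have "openin (top_of_set U) (W \<inter> U)"
      using openin_Int[OF W chart(1)] openin_imp_subset[OF chart(1)]
      by (auto intro: openin_subset_trans)
    then have "openin (top_of_set T) (h ` (W \<inter> U))"
      using homeomorphism_imp_open_map[OF hom] chart(5) openin_trans by blast
    moreover have "homeomorphism (W \<inter> U) (h ` (W \<inter> U)) h h'"
      using hom by (rule homeomorphism_of_subsets) (auto simp: homeomorphism_def)
    moreover have WU: "W \<inter> U \<subseteq> M"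
      using W openin_imp_subset by blast
    ultimately have "openin (top_of_set V) (\<psi> ` (W \<inter> U))"
    proof (intro invariance_of_domain_homeomorphic[OF _ _ chart(3) \<open>subspace V\<close>])
      show "W \<inter> U homeomorphic h ` (W \<inter> U)"
        using \<open>homeomorphism (W \<inter> U) (h ` (W \<inter> U)) h h'\<close> homeomorphic_def by blast
      show "dim V \<le> dim T"
        using chart(4) \<open>dim V \<le> d\<close> by simp
      show "continuous_on (W \<inter> U) \<psi>"
        using cont WU by (rule continuous_on_subset)
      show "inj_on \<psi> (W \<inter> U)"
        using inj WU by (rule inj_on_subset)
      show "\<psi> ` (W \<inter> U) \<subseteq> V"
        using into WU by blast
    qed
    then have "openin (top_of_set (\<psi> ` M)) (\<psi> ` (W \<inter> U))"
      by (rule openin_subset_trans) (use WU into in auto)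
    with \<open>y \<in> W\<close> \<open>y \<in> U\<close> show ?thesis by blast
  qed
  then show ?thesis
    by (subst openin_subopen) blast
qed

lemma topological_embedding_injective_into_subspace:
  fixes \<psi> :: "real^'m::finite \<Rightarrow> 'b::euclidean_space"
  assumes "M \<subseteq> manifold_interior d M" "continuous_on M \<psi>" "inj_on \<psi> M"
    and "subspace V" "dim V \<le> d" "\<psi> ` M \<subseteq> V"
  shows "topological_embedding M \<psi>"
proof -
  obtain k where "homeomorphism M (\<psi> ` M) \<psi> k"
    by (rule homeomorphism_injective_open_map[OF assms(2) refl assms(3)
          injective_into_subspace_imp_open_map[OF assms]])
  then show ?thesis
    unfolding topological_embedding_def by blast
qed

lemma topological_embedding_factor:
  assumes emb: "topological_embedding M (q \<circ> p)"
    and "continuous_on M p" "continuous_on (p ` M) q"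
  shows "topological_embedding M p"
proof -
  obtain k where hom: "homeomorphism M ((q \<circ> p) ` M) (q \<circ> p) k"
    using emb unfolding topological_embedding_def by blast
  then have inv: "\<And>x. x \<in> M \<Longrightarrow> k (q (p x)) = x" and "continuous_on ((q \<circ> p) ` M) k"
    by (auto simp: homeomorphism_def)
  have "homeomorphism M (p ` M) p (k \<circ> q)"
  proof (rule homeomorphismI)
    show "continuous_on (p ` M) (k \<circ> q)"
      using continuous_on_compose[OF assms(3)] \<open>continuous_on ((q \<circ> p) ` M) k\<close>
      by (simp add: image_comp)
  qed (use assms(2) inv in auto)
  then show ?thesis
    unfolding topological_embedding_def by blast
qed

lemma simple_problem_inj_on_sub_eval_map:
  assumes "simple_problem X f"
  shows "inj_on (sub_eval_map f g) (pareto_set X f g)"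
proof -
  obtain k where "homeomorphism (pareto_set X f g) (sub_eval_map f g ` pareto_set X f g)
      (sub_eval_map f g) k"
    using assms unfolding simple_problem_def topological_embedding_def by blast
  then show ?thesis
    by (metis homeomorphism_apply1 inj_on_inverseI)
qed

lemma topological_embedding_coord_proj_pareto_front:
  assumes "simple_problem X f" and card: "card (g - {j\<^sub>0}) = card g - 1"
  shows "topological_embedding (manifold_interior (card g - 1) (eval_map f ` pareto_set X f g))
           (coord_proj (g - {j\<^sub>0}))"
    (is "topological_embedding ?M _")
proof (rule topological_embedding_injective_into_subspace)
  show "?M \<subseteq> manifold_interior (card g - 1) ?M"
    by (rule manifold_interior_subset_manifold_interior)
  show "inj_on (coord_proj (g - {j\<^sub>0})) ?M"
    using inj_on_coord_proj_pareto_front[OF simple_problem_inj_on_sub_eval_map[OF assms(1)]]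
      manifold_interior_subset by (rule inj_on_subset)
  show "dim (span ((\<lambda>j. axis j (1::real)) ` (g - {j\<^sub>0}))) \<le> card g - 1"
    using dim_span_axis_le_card[of "g - {j\<^sub>0}"] card by simp
  show "coord_proj (g - {j\<^sub>0}) ` ?M \<subseteq> span ((\<lambda>j. axis j 1) ` (g - {j\<^sub>0}))"
    using coord_proj_in_span_axis by blast
qed (simp_all add: continuous_on_coord_proj)

lemma obtain_index_card_Diff_singleton:
  fixes g :: "'m::finite set"
  obtains j\<^sub>0 where "i \<notin> g - {j\<^sub>0}" "card (g - {j\<^sub>0}) = card g - 1"
proof (cases "i \<in> g \<or> g = {}")
  case True
  then show ?thesis
    using that[of i] by (auto simp: card_Diff_singleton)
next
  case False
  then obtain j where "j \<in> g" by blast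
  then show ?thesis
    using that[of j] False by (auto simp: card_Diff_singleton)
qed

theorem corollary1:
  fixes X :: "(real^'n) set" and f :: "'m::finite \<Rightarrow> real^'n \<Rightarrow> real"
    and g :: "'m set" and i :: 'm
  assumes "simple_problem X f"
  shows "topological_embedding
           (manifold_interior (card g - 1) (eval_map f ` pareto_set X f g))
           (proj_minus i)"
proof -
  obtain j\<^sub>0 where "i \<notin> g - {j\<^sub>0}" and card: "card (g - {j\<^sub>0}) = card g - 1"
    by (rule obtain_index_card_Diff_singleton)
  then have "coord_proj (g - {j\<^sub>0}) \<circ> proj_minus i = coord_proj (g - {j\<^sub>0})"
    by (auto simp: fun_eq_iff proj_minus_eq_coord_proj coord_proj_coord_proj Int_absorb2)
  with topological_embedding_coord_proj_pareto_front[OF assms card]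
  have "topological_embedding (manifold_interior (card g - 1) (eval_map f ` pareto_set X f g))
      (coord_proj (g - {j\<^sub>0}) \<circ> proj_minus i)"
    by simp
  then show ?thesis
    unfolding proj_minus_eq_coord_proj
    by (rule topological_embedding_factor) (rule continuous_on_coord_proj)+
qed

end
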